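(* For all $p\in[1,\infty)$, $$\sup_{N\in\mathbb{N}}\Big(N^p\cdot\mathbb{P}\big[(\Omega^N_N)^c\big]\Big)<\infty.$$
   Context: Standing setting: $T\in(0,\infty)$; $(\Omega,\mathcal{F},\mathbb{P})$ with normal filtration $(\mathcal{F}_t)_{t\in[0,T]}$; $d,m\in\mathbb{N}$; $W$ an $m$-dimensional standard $(\mathcal{F}_t)$-Brownian motion; $\xi$ $\mathcal{F}_0$-measurable in $\mathbb{R}^d$ with $\mathbb{E}\|\xi\|^p<\infty$ for all $p\ge1$. $\|\cdot\|$ Euclidean/operator norm. $\mu\colon\mathbb{R}^d\to\mathbb{R}^d$ is $C^1$, $\sigma\colon\mathbb{R}^d\to\mathbb{R}^{d\times m}$, and there is $c\in(0,\infty)$ with $\|\mu'(x)\|\le c(1+\|x\|^c)$, $\|\sigma(x)-\sigma(y)\|\le c\|x-y\|$, $\langle x-y,\mu(x)-\mu(y)\rangle\le c\|x-y\|^2$. $\Delta W^N_n:=W_{(n+1)T/N}-W_{nT/N}$; tamed Euler scheme $Y^N_0=\xi$, $Y^N_{n+1}=Y^N_n+\frac{(T/N)\mu(Y^N_n)}{1+(T/N)\|\mu(Y^N_n)\|}+\sigma(Y^N_n)\Delta W^N_n$. $\lambda:=(1+2c+T+\|\mu(0)\|+\|\sigma(0)\|)^4$; $\alpha^N_n:=\mathbf{1}_{\{\|Y^N_n\|\ge1\}}\big\langle\frac{Y^N_n}{\|Y^N_n\|},\frac{\sigma(Y^N_n)}{\|Y^N_n\|}\Delta W^N_n\big\rangle$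 (0 if $\|Y^N_n\|<1$); $D^N_n:=(\lambda+\|\xi\|)\exp\big(\lambda+\sup_{u\in\{0,\dots,n\}}\sum_{k=u}^{n-1}[\lambda\|\Delta W^N_k\|^2+\alpha^N_k]\big)$, empty sums $0$. $\Omega^N_n:=\{\omega:\ \sup_{k\in\{0,\dots,n-1\}}D^N_k(\omega)\le N^{1/(2c)},\ \sup_{k\in\{0,\dots,n-1\}}\|\Delta W^N_k(\omega)\|\le1\}$. *)

theory Defs
  imports "HOL-Probability.Probability"
begin

definition normal_filtration :: "'a measure \<Rightarrow> real \<Rightarrow> (real \<Rightarrow> 'a measure) \<Rightarrow> bool" where
  "normal_filtration M T F \<longleftrightarrow>
     (\<forall>t\<in>{0..T}. space (F t) = space M \<and> sets (F t) \<subseteq> sets M) \<and>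
     (\<forall>s t. 0 \<le> s \<and> s \<le> t \<and> t \<le> T \<longrightarrow> sets (F s) \<subseteq> sets (F t)) \<and>
     (\<forall>t\<in>{0..<T}. sets (F t) = (\<Inter>s\<in>{t<..T}. sets (F s))) \<and>
     (\<forall>A\<in>sets M. emeasure M A = 0 \<longrightarrow> A \<in> sets (F 0))"

definition std_brownian_motion ::
  "'a measure \<Rightarrow> real \<Rightarrow> (real \<Rightarrow> 'a measure) \<Rightarrow> (real \<Rightarrow> 'a \<Rightarrow> real^'m::finite) \<Rightarrow> bool" where
  "std_brownian_motion M T F W \<longleftrightarrow>
     (AE \<omega> in M. W 0 \<omega> = 0) \<and>
     (AE \<omega> in M. continuous_on {0..T} (\<lambda>t. W t \<omega>)) \<and>
     (\<forall>t\<in>{0..T}. W t \<in> borel_measurable (F t)) \<and>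
     (\<forall>s t. 0 \<le> s \<and> s < t \<and> t \<le> T \<longrightarrow>
        distributed M lborel (\<lambda>\<omega>. W t \<omega> - W s \<omega>)
          (\<lambda>x. ennreal (\<Prod>j\<in>UNIV. normal_density 0 (sqrt (t - s)) (x $ j))) \<and>
        (\<forall>A\<in>sets (F s). \<forall>B\<in>sets borel.
           measure M (A \<inter> ((\<lambda>\<omega>. W t \<omega> - W s \<omega>) -` B \<inter> space M)) =
           measure M A * measure M ((\<lambda>\<omega>. W t \<omega> - W s \<omega>) -` B \<inter> space M)))"

definition dW :: "real \<Rightarrow> (real \<Rightarrow> 'a \<Rightarrow> real^'m::finite) \<Rightarrow> nat \<Rightarrow> nat \<Rightarrow> 'a \<Rightarrow> real^'m" where
  "dW T W N n \<omega> = W (real (n + 1) * T / real N) \<omega> - W (real n * T / real N) \<omega>"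

fun tamed_euler :: "real \<Rightarrow> (real^'d::finite \<Rightarrow> real^'d) \<Rightarrow> (real^'d \<Rightarrow> ((real^'m::finite) \<Rightarrow>\<^sub>L (real^'d)))
    \<Rightarrow> (real \<Rightarrow> 'a \<Rightarrow> real^'m) \<Rightarrow> ('a \<Rightarrow> real^'d) \<Rightarrow> nat \<Rightarrow> nat \<Rightarrow> 'a \<Rightarrow> real^'d" where
  "tamed_euler T \<mu> \<sigma> W \<xi> N 0 \<omega> = \<xi> \<omega>"
| "tamed_euler T \<mu> \<sigma> W \<xi> N (Suc n) \<omega> =
     (let y = tamed_euler T \<mu> \<sigma> W \<xi> N n \<omega>; h = T / real N in
        y + (h / (1 + h * norm (\<mu> y))) *\<^sub>R \<mu> y + blinfun_apply (\<sigma> y) (dW T W N n \<omega>))"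

definition lam :: "real \<Rightarrow> real \<Rightarrow> (real^'d::finite \<Rightarrow> real^'d) \<Rightarrow> (real^'d \<Rightarrow> ((real^'m::finite) \<Rightarrow>\<^sub>L (real^'d))) \<Rightarrow> real" where
  "lam c T \<mu> \<sigma> = (1 + 2 * c + T + norm (\<mu> 0) + norm (\<sigma> 0)) ^ 4"

definition alpha :: "real \<Rightarrow> (real^'d::finite \<Rightarrow> real^'d) \<Rightarrow> (real^'d \<Rightarrow> ((real^'m::finite) \<Rightarrow>\<^sub>L (real^'d)))
    \<Rightarrow> (real \<Rightarrow> 'a \<Rightarrow> real^'m) \<Rightarrow> ('a \<Rightarrow> real^'d) \<Rightarrow> nat \<Rightarrow> nat \<Rightarrow> 'a \<Rightarrow> real" where
  "alpha T \<mu> \<sigma> W \<xi> N n \<omega> =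
     (let y = tamed_euler T \<mu> \<sigma> W \<xi> N n \<omega> in
        if norm y \<ge> 1 then inner (y /\<^sub>R norm y) (blinfun_apply (\<sigma> y) (dW T W N n \<omega>) /\<^sub>R norm y) else 0)"

definition Dn :: "real \<Rightarrow> real \<Rightarrow> (real^'d::finite \<Rightarrow> real^'d) \<Rightarrow> (real^'d \<Rightarrow> ((real^'m::finite) \<Rightarrow>\<^sub>L (real^'d)))
    \<Rightarrow> (real \<Rightarrow> 'a \<Rightarrow> real^'m) \<Rightarrow> ('a \<Rightarrow> real^'d) \<Rightarrow> nat \<Rightarrow> nat \<Rightarrow> 'a \<Rightarrow> real" where
  "Dn c T \<mu> \<sigma> W \<xi> N n \<omega> =
     (let l = lam c T \<mu> \<sigma> in
       (l + norm (\<xi> \<omega>)) * exp (l + Max ((\<lambda>u. \<Sum>k\<in>{u..<n}.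
            l * (norm (dW T W N k \<omega>))\<^sup>2 + alpha T \<mu> \<sigma> W \<xi> N k \<omega>) ` {0..n})))"

definition OmegaN :: "'a measure \<Rightarrow> real \<Rightarrow> real \<Rightarrow> (real^'d::finite \<Rightarrow> real^'d) \<Rightarrow> (real^'d \<Rightarrow> ((real^'m::finite) \<Rightarrow>\<^sub>L (real^'d)))
    \<Rightarrow> (real \<Rightarrow> 'a \<Rightarrow> real^'m) \<Rightarrow> ('a \<Rightarrow> real^'d) \<Rightarrow> nat \<Rightarrow> nat \<Rightarrow> 'a set" where
  "OmegaN M c T \<mu> \<sigma> W \<xi> N n =
     {\<omega>\<in>space M. (\<forall>k<n. Dn c T \<mu> \<sigma> W \<xi> N k \<omega> \<le> real N powr (1 / (2 * c))) \<and>
                 (\<forall>k<n. norm (dW T W N k \<omega>) \<le> 1)}"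

end

theory Submission
  imports Defs
begin

(* Put r = 1/(2c), S_{u,k} = sum_{j=u}^{k-1} (lambda |dW_j|^2 + alpha_j), so that
   D_k = (lambda + |xi|) exp (lambda + max_{u<=k} S_{u,k}).  Outside Omega^N_N some
   increment satisfies |dW_k| >= 1, or some D_k exceeds N^r; in the latter case, once
   N is so large that lambda <= y_N = N^(r/2) e^(-lambda) / 2, either |xi| >= y_N or some
   S_{u,k} >= (r/2) ln N.  Each event is estimated by Markov's inequality:
   - |xi| >= y_N, using a moment of xi of order q with r q / 2 >= p;
   - |dW_k| >= 1, using E exp (N |dW_k|^2 / (4T)) <= 2^(m/2), which decays like e^(-N/(4T));
   - S_{u,k} >= (r/2) ln N, using a bound on E exp (theta S_{u,k}) that is uniform in N.
   The last bound is the heart of the proof: alpha_j = <V(Y_j), dW_j> with V bounded and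
   Y_j measurable at time t_j, while dW_j is Gaussian and independent of F(t_j).
   Integrating out dW_j (an explicit Gaussian integral of exp of a quadratic) gives one
   factor exp (T/N * const) per step.  Choosing theta with theta r/2 = p + 2 makes each
   of the at most N^2 events of probability O(N^(-p-2)). *)

section \<open>Gaussian integrals of exponentials of quadratics\<close>

lemma nn_integral_normal_density_one:
  assumes "0 < s" shows "(\<integral>\<^sup>+ x. ennreal (normal_density m s x) \<partial>lborel) = 1"
proof -
  have "(\<integral>\<^sup>+ x. ennreal (normal_density m s x) \<partial>lborel) = ennreal (\<integral>x. normal_density m s x \<partial>lborel)"
    by (rule nn_integral_eq_integral) (auto intro: integrable_normal_density assms)
  thus ?thesis using integral_normal_density assms by simp
qed

text \<open>Completing the square: for a centred normal density with variance \<open>s\<^sup>2\<close> and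
  \<open>1 - 2 a s\<^sup>2 > 0\<close>, the expectation of \<open>exp (a y\<^sup>2 + b y)\<close> is explicit.\<close>
lemma gaussian_exp_quadratic:
  fixes s a b :: real
  assumes s: "0 < s" and q: "0 < 1 - 2 * a * s\<^sup>2"
  shows "(\<integral>\<^sup>+ y. ennreal (normal_density 0 s y * exp (a * y\<^sup>2 + b * y)) \<partial>lborel)
         = ennreal (exp (b\<^sup>2 * s\<^sup>2 / (2 * (1 - 2 * a * s\<^sup>2))) / sqrt (1 - 2 * a * s\<^sup>2))"
proof -
  define q where "q = 1 - 2 * a * s\<^sup>2"
  define s' where "s' = s / sqrt q"
  define m where "m = b * s\<^sup>2 / q"
  define K where "K = exp (b\<^sup>2 * s\<^sup>2 / (2 * q)) / sqrt q"
  have qp: "q > 0" using q q_def by simp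
  have s'p: "s' > 0" using qp s by (simp add: s'_def)
  have s'2: "s'\<^sup>2 = s\<^sup>2 / q" using qp by (simp add: s'_def power_divide)
  have shifted: "normal_density 0 s y * exp (a * y\<^sup>2 + b * y) = K * normal_density m s' y" for y
  proof -
    have exponent: "- (y - 0)\<^sup>2 / (2 * s\<^sup>2) + (a * y\<^sup>2 + b * y)
        = b\<^sup>2 * s\<^sup>2 / (2 * q) + (-(y - m)\<^sup>2 / (2 * s'\<^sup>2))"
    proof -
      have a_eq: "a = (1 - q) / (2 * s\<^sup>2)" using s by (simp add: q_def field_simps)
      show ?thesis unfolding s'2 m_def a_eq using qp s by (simp add: field_simps power2_eq_square)
    qed
    have normaliser: "sqrt (2 * pi * s'\<^sup>2) = sqrt (2 * pi * s\<^sup>2) / sqrt q"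
      using qp by (simp add: s'2 real_sqrt_divide)
    have "normal_density 0 s y * exp (a * y\<^sup>2 + b * y)
        = 1 / sqrt (2 * pi * s\<^sup>2) * exp (- (y - 0)\<^sup>2 / (2 * s\<^sup>2) + (a * y\<^sup>2 + b * y))"
      unfolding normal_density_def exp_add by simp
    also have "\<dots> = 1 / sqrt (2 * pi * s\<^sup>2) * (exp (b\<^sup>2 * s\<^sup>2 / (2 * q)) * exp (-(y - m)\<^sup>2 / (2 * s'\<^sup>2)))"
      unfolding exponent exp_add by simp
    also have "\<dots> = K * normal_density m s' y"
      unfolding normal_density_def normaliser K_def using qp by simp
    finally show ?thesis .
  qed
  have K0: "K \<ge> 0" using qp by (simp add: K_def)
  have "(\<integral>\<^sup>+ y. ennreal (K * normal_density m s' y) \<partial>lborel)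
      = (\<integral>\<^sup>+ y. ennreal K * ennreal (normal_density m s' y) \<partial>lborel)"
    using K0 by (simp add: ennreal_mult)
  also have "\<dots> = ennreal K" by (simp add: nn_integral_cmult nn_integral_normal_density_one s'p)
  finally show ?thesis
    unfolding shifted q_def[symmetric] K_def .
qed

lemma prod_Basis_vec:
  fixes g :: "real^'m::finite \<Rightarrow> 'b::comm_monoid_mult"
  shows "(\<Prod>b\<in>Basis. g b) = (\<Prod>i\<in>UNIV. g (axis i 1))"
proof -
  have "(Basis :: (real^'m) set) = range (\<lambda>i. axis i 1)"
    unfolding Basis_vec_def by auto
  hence "(\<Prod>b\<in>Basis. g b) = (\<Prod>b\<in>range (\<lambda>i. axis i (1::real)). g b)" by simp
  also have "\<dots> = (\<Prod>i\<in>UNIV. g (axis i 1))"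
    by (subst prod.reindex) (auto simp: inj_on_def axis_eq_axis)
  finally show ?thesis .
qed

text \<open>The same computation for the standard Gaussian vector with covariance \<open>h I\<close>:
  the density factorises over the coordinates, and so does \<open>exp (a |x|\<^sup>2 + \<langle>v,x\<rangle>)\<close>.\<close>
lemma gaussian_vec_exp_quadratic:
  fixes h a :: real and v :: "real^'m::finite"
  assumes h: "0 < h" and q: "0 < 1 - 2 * a * h"
  shows "(\<integral>\<^sup>+ x. ennreal (\<Prod>j\<in>UNIV. normal_density 0 (sqrt h) (x $ j))
                 * ennreal (exp (a * (norm x)\<^sup>2 + inner v x)) \<partial>lborel)
       = ennreal (exp ((norm v)\<^sup>2 * h / (2 * (1 - 2 * a * h))) / sqrt (1 - 2 * a * h) ^ CARD('m))"
proof -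
  define f where "f = (\<lambda>(b::real^'m) y. normal_density 0 (sqrt h) y * exp (a * y\<^sup>2 + inner v b * y))"
  have sh: "0 < sqrt h" using h by simp
  have q': "0 < 1 - 2 * a * (sqrt h)\<^sup>2" using q h by simp
  have norm2: "(norm z)\<^sup>2 = (\<Sum>i\<in>UNIV. (z $ i)\<^sup>2)" for z :: "real^'m"
    unfolding power2_norm_eq_inner inner_vec_def by (simp add: power2_eq_square)
  have factorise: "ennreal (\<Prod>j\<in>UNIV. normal_density 0 (sqrt h) (x $ j))
        * ennreal (exp (a * (norm x)\<^sup>2 + inner v x)) = ennreal (\<Prod>b\<in>Basis. f b (inner x b))"
    for x :: "real^'m"
  proof -
    have "exp (a * (norm x)\<^sup>2 + inner v x) = (\<Prod>i\<in>UNIV. exp (a * (x $ i)\<^sup>2 + v $ i * x $ i))"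
      unfolding norm2 inner_vec_def sum_distrib_left sum.distrib[symmetric] by (simp add: exp_sum)
    hence "(\<Prod>j\<in>UNIV. normal_density 0 (sqrt h) (x $ j)) * exp (a * (norm x)\<^sup>2 + inner v x)
        = (\<Prod>i\<in>UNIV. f (axis i 1) (inner x (axis i 1)))"
      by (simp add: f_def prod.distrib inner_axis)
    thus ?thesis
      by (simp add: prod_Basis_vec ennreal_mult'[symmetric] prod_nonneg)
  qed
  have "(\<integral>\<^sup>+ x. ennreal (\<Prod>b\<in>Basis. f b (inner x b)) \<partial>lborel)
      = (\<integral>\<^sup>+ x. (\<Prod>b\<in>Basis. ennreal (f b (inner x b))) \<partial>lborel)"
    by (simp add: prod_ennreal f_def)
  also have "\<dots> = (\<Prod>b\<in>Basis. (\<integral>\<^sup>+ y. ennreal (f b y) \<partial>lborel))"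
    by (rule nn_integral_lborel_prod) (auto simp: f_def)
  also have "\<dots> = (\<Prod>b\<in>Basis. ennreal (exp ((inner v b)\<^sup>2 * h / (2 * (1 - 2 * a * h))) / sqrt (1 - 2 * a * h)))"
    unfolding f_def using gaussian_exp_quadratic[OF sh q'] h by simp
  also have "\<dots> = ennreal (\<Prod>b\<in>Basis. exp ((inner v b)\<^sup>2 * h / (2 * (1 - 2 * a * h))) / sqrt (1 - 2 * a * h))"
    by (rule prod_ennreal) (use q in simp)
  also have "(\<Prod>b\<in>Basis. exp ((inner v b)\<^sup>2 * h / (2 * (1 - 2 * a * h))) / sqrt (1 - 2 * a * h))
      = exp ((norm v)\<^sup>2 * h / (2 * (1 - 2 * a * h))) / sqrt (1 - 2 * a * h) ^ CARD('m)"
    unfolding prod_Basis_vec norm2 prod_dividef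
    by (simp add: inner_axis exp_sum[symmetric] sum_divide_distrib[symmetric] sum_distrib_right[symmetric])
  finally show ?thesis unfolding factorise .
qed

section \<open>Integrating out an independent Gaussian increment\<close>

lemma measurable_from_sub:
  assumes "f \<in> measurable F N" "space F = space M" "sets F \<subseteq> sets M"
  shows "f \<in> measurable M N"
  using assms unfolding measurable_def by auto

lemma distr_pair_indep:
  fixes Z :: "'a \<Rightarrow> 'b::second_countable_topology" and X :: "'a \<Rightarrow> 'c::euclidean_space"
  assumes P: "prob_space M"
    and Fs: "space Fs = space M" "sets Fs \<subseteq> sets M"
    and Z: "Z \<in> borel_measurable Fs" and X: "X \<in> measurable M lborel"
    and I: "\<forall>A\<in>sets Fs. \<forall>B\<in>sets borel.
           measure M (A \<inter> (X -` B \<inter> space M)) = measure M A * measure M (X -` B \<inter> space M)"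
  shows "distr M borel Z \<Otimes>\<^sub>M distr M lborel X
       = distr M (distr M borel Z \<Otimes>\<^sub>M distr M lborel X) (\<lambda>\<omega>. (Z \<omega>, X \<omega>))"
    (is "?PZ \<Otimes>\<^sub>M ?PX = distr M (?PZ \<Otimes>\<^sub>M ?PX) ?ZX")
proof (rule pair_measure_eqI)
  interpret prob_space M by fact
  have ZM: "Z \<in> borel_measurable M" using measurable_from_sub[OF Z Fs] .
  show "sigma_finite_measure ?PZ" "sigma_finite_measure ?PX"
    using prob_space_distr[OF ZM] prob_space_distr[OF X] by (simp_all add: prob_space_imp_sigma_finite)
  show "sets (?PZ \<Otimes>\<^sub>M ?PX) = sets (distr M (?PZ \<Otimes>\<^sub>M ?PX) ?ZX)" by simp
  fix A B assume A: "A \<in> sets ?PZ" and B: "B \<in> sets ?PX"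
  have ZXM: "?ZX \<in> measurable M (?PZ \<Otimes>\<^sub>M ?PX)"
    using ZM X by (simp cong: measurable_cong_sets)
  have ZA: "Z -` A \<inter> space M \<in> sets Fs"
    using measurable_sets[OF Z, of A] A Fs by simp
  have "?ZX -` (A \<times> B) \<inter> space M = (Z -` A \<inter> space M) \<inter> (X -` B \<inter> space M)"
    by auto
  hence "emeasure (distr M (?PZ \<Otimes>\<^sub>M ?PX) ?ZX) (A \<times> B)
      = emeasure M ((Z -` A \<inter> space M) \<inter> (X -` B \<inter> space M))"
    using ZXM A B by (simp add: emeasure_distr)
  also have "\<dots> = ennreal (measure M (Z -` A \<inter> space M) * measure M (X -` B \<inter> space M))"
    using I ZA B by (simp add: emeasure_eq_measure)
  also have "\<dots> = emeasure ?PZ A * emeasure ?PX B"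
    using A B ZM X by (simp add: emeasure_distr emeasure_eq_measure ennreal_mult')
  finally show "emeasure ?PZ A * emeasure ?PX B = emeasure (distr M (?PZ \<Otimes>\<^sub>M ?PX) ?ZX) (A \<times> B)"
    by simp
qed

text \<open>Consequently, if moreover \<open>X\<close> has density \<open>f\<close>, then \<open>E g(Z,X) = E \<integral> f(x) g(Z,x) dx\<close>
  by Tonelli's theorem.\<close>
lemma nn_integral_indep_density:
  fixes Z :: "'a \<Rightarrow> 'b::second_countable_topology" and X :: "'a \<Rightarrow> 'c::euclidean_space"
    and g :: "'b \<times> 'c \<Rightarrow> ennreal"
  assumes P: "prob_space M"
    and Fs: "space Fs = space M" "sets Fs \<subseteq> sets M"
    and Z: "Z \<in> borel_measurable Fs"
    and D: "distributed M lborel X f"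
    and I: "\<forall>A\<in>sets Fs. \<forall>B\<in>sets borel.
           measure M (A \<inter> (X -` B \<inter> space M)) = measure M A * measure M (X -` B \<inter> space M)"
    and g: "g \<in> borel_measurable (borel \<Otimes>\<^sub>M borel)"
  shows "(\<integral>\<^sup>+ \<omega>. g (Z \<omega>, X \<omega>) \<partial>M) = (\<integral>\<^sup>+ \<omega>. (\<integral>\<^sup>+ x. f x * g (Z \<omega>, x) \<partial>lborel) \<partial>M)"
proof -
  interpret prob_space M by fact
  have ZM: "Z \<in> borel_measurable M" using measurable_from_sub[OF Z Fs] .
  have XM: "X \<in> measurable M lborel" and fM: "f \<in> borel_measurable lborel"
    and PXeq: "distr M lborel X = density lborel f"
    using D by (simp_all add: distributed_def)
  define PZ where "PZ = distr M borel Z"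
  define PX where "PX = distr M lborel X"
  interpret PX: prob_space PX unfolding PX_def by (rule prob_space_distr[OF XM])
  have gM: "g \<in> borel_measurable (PZ \<Otimes>\<^sub>M PX)"
    using g by (simp add: PZ_def PX_def cong: measurable_cong_sets)
  have ZXM: "(\<lambda>\<omega>. (Z \<omega>, X \<omega>)) \<in> measurable M (PZ \<Otimes>\<^sub>M PX)"
    using ZM XM by (simp add: PZ_def PX_def cong: measurable_cong_sets)
  have "(\<integral>\<^sup>+ \<omega>. g (Z \<omega>, X \<omega>) \<partial>M) = integral\<^sup>N (distr M (PZ \<Otimes>\<^sub>M PX) (\<lambda>\<omega>. (Z \<omega>, X \<omega>))) g"
    using gM ZXM by (simp add: nn_integral_distr)
  also have "\<dots> = (\<integral>\<^sup>+ z. \<integral>\<^sup>+ x. g (z, x) \<partial>PX \<partial>PZ)"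
    using PX.nn_integral_fst[OF gM] distr_pair_indep[OF P Fs Z XM I] by (simp add: PZ_def PX_def)
  also have "\<dots> = (\<integral>\<^sup>+ \<omega>. (\<integral>\<^sup>+ x. g (Z \<omega>, x) \<partial>PX) \<partial>M)"
    unfolding PZ_def
    by (rule nn_integral_distr[OF ZM]) (use PX.borel_measurable_nn_integral_fst[OF gM] in \<open>simp add: PZ_def\<close>)
  also have "\<dots> = (\<integral>\<^sup>+ \<omega>. (\<integral>\<^sup>+ x. f x * g (Z \<omega>, x) \<partial>lborel) \<partial>M)"
  proof (rule nn_integral_cong)
    fix \<omega>
    have "(\<lambda>x. g (Z \<omega>, x)) \<in> borel_measurable lborel"
      using g by (simp cong: measurable_cong_sets)
    thus "(\<integral>\<^sup>+ x. g (Z \<omega>, x) \<partial>PX) = (\<integral>\<^sup>+ x. f x * g (Z \<omega>, x) \<partial>lborel)"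
      unfolding PX_def PXeq by (rule nn_integral_density[OF fM])
  qed
  finally show ?thesis .
qed

lemma gaussian_vec_exp_quadratic_le:
  fixes h a :: real and v :: "real^'m::finite"
  assumes h: "0 < h" and q: "0 < 1 - 2 * a * h" and v: "norm v \<le> K"
  shows "(\<integral>\<^sup>+ x. ennreal (\<Prod>j\<in>UNIV. normal_density 0 (sqrt h) (x $ j))
                 * ennreal (exp (a * (norm x)\<^sup>2 + inner v x)) \<partial>lborel)
       \<le> ennreal (exp (K\<^sup>2 * h / (2 * (1 - 2 * a * h))) / sqrt (1 - 2 * a * h) ^ CARD('m))"
  unfolding gaussian_vec_exp_quadratic[OF h q]
proof (intro ennreal_leI divide_right_mono)
  have "(norm v)\<^sup>2 \<le> K\<^sup>2"
    using v by (intro power_mono) auto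
  thus "exp ((norm v)\<^sup>2 * h / (2 * (1 - 2 * a * h))) \<le> exp (K\<^sup>2 * h / (2 * (1 - 2 * a * h)))"
    using h q by (simp add: divide_right_mono mult_right_mono)
qed (use q in simp)

lemma nn_integral_exp_quadratic_indep_le:
  fixes X :: "'a \<Rightarrow> real^'m::finite" and G :: "'a \<Rightarrow> real" and V :: "'a \<Rightarrow> real^'m"
  assumes P: "prob_space M"
    and Fs: "space Fs = space M" "sets Fs \<subseteq> sets M"
    and GM: "G \<in> borel_measurable Fs" and VM: "V \<in> borel_measurable Fs"
    and G0: "\<And>\<omega>. \<omega> \<in> space M \<Longrightarrow> 0 \<le> G \<omega>"
    and VK: "\<And>\<omega>. \<omega> \<in> space M \<Longrightarrow> norm (V \<omega>) \<le> K"
    and h: "0 < h" and q: "0 < 1 - 2 * a * h"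
    and D: "distributed M lborel X (\<lambda>x. ennreal (\<Prod>j\<in>UNIV. normal_density 0 (sqrt h) (x $ j)))"
    and I: "\<forall>A\<in>sets Fs. \<forall>B\<in>sets borel.
           measure M (A \<inter> (X -` B \<inter> space M)) = measure M A * measure M (X -` B \<inter> space M)"
  shows "(\<integral>\<^sup>+ \<omega>. ennreal (G \<omega> * exp (a * (norm (X \<omega>))\<^sup>2 + inner (V \<omega>) (X \<omega>))) \<partial>M)
     \<le> ennreal (exp (K\<^sup>2 * h / (2 * (1 - 2 * a * h))) / sqrt (1 - 2 * a * h) ^ CARD('m))
        * (\<integral>\<^sup>+ \<omega>. ennreal (G \<omega>) \<partial>M)"
proof -
  define g where "g = (\<lambda>p :: (real \<times> (real^'m)) \<times> (real^'m).
    ennreal (fst (fst p) * exp (a * (norm (snd p))\<^sup>2 + inner (snd (fst p)) (snd p))))"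
  define \<phi> where "\<phi> = (\<lambda>x::real^'m. ennreal (\<Prod>j\<in>UNIV. normal_density 0 (sqrt h) (x $ j)))"
  define C where "C = exp (K\<^sup>2 * h / (2 * (1 - 2 * a * h))) / sqrt (1 - 2 * a * h) ^ CARD('m)"
  have "(\<lambda>p :: (real \<times> (real^'m)) \<times> (real^'m). fst (fst p) * exp (a * (norm (snd p))\<^sup>2
          + inner (snd (fst p)) (snd p))) \<in> borel_measurable borel"
    by (intro borel_measurable_continuous_onI continuous_intros)
  hence gM: "g \<in> borel_measurable (borel \<Otimes>\<^sub>M borel)" unfolding g_def borel_prod by measurable
  have ZM: "(\<lambda>\<omega>. (G \<omega>, V \<omega>)) \<in> borel_measurable Fs" using GM VM by measurable
  have inner_integral: "(\<integral>\<^sup>+ x. \<phi> x * g ((G \<omega>, V \<omega>), x) \<partial>lborel) \<le> ennreal C * ennreal (G \<omega>)"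
    if \<omega>: "\<omega> \<in> space M" for \<omega>
  proof -
    have "(\<integral>\<^sup>+ x. \<phi> x * g ((G \<omega>, V \<omega>), x) \<partial>lborel)
        = ennreal (G \<omega>) * (\<integral>\<^sup>+ x. \<phi> x * ennreal (exp (a * (norm x)\<^sup>2 + inner (V \<omega>) x)) \<partial>lborel)"
      using G0[OF \<omega>] by (subst nn_integral_cmult[symmetric])
        (auto simp: \<phi>_def g_def ennreal_mult' mult_ac intro!: nn_integral_cong)
    also have "\<dots> \<le> ennreal (G \<omega>) * ennreal C"
      unfolding C_def \<phi>_def by (intro mult_left_mono gaussian_vec_exp_quadratic_le h q VK \<omega>) auto
    finally show ?thesis by (simp add: mult.commute)
  qed
  have "(\<integral>\<^sup>+ \<omega>. ennreal (G \<omega> * exp (a * (norm (X \<omega>))\<^sup>2 + inner (V \<omega>) (X \<omega>))) \<partial>M)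
     = (\<integral>\<^sup>+ \<omega>. g ((G \<omega>, V \<omega>), X \<omega>) \<partial>M)" by (simp add: g_def)
  also have "\<dots> = (\<integral>\<^sup>+ \<omega>. (\<integral>\<^sup>+ x. \<phi> x * g ((G \<omega>, V \<omega>), x) \<partial>lborel) \<partial>M)"
    unfolding \<phi>_def by (rule nn_integral_indep_density[OF P Fs ZM D I gM])
  also have "\<dots> \<le> (\<integral>\<^sup>+ \<omega>. ennreal C * ennreal (G \<omega>) \<partial>M)"
    by (rule nn_integral_mono) (rule inner_integral)
  also have "\<dots> = ennreal C * (\<integral>\<^sup>+ \<omega>. ennreal (G \<omega>) \<partial>M)"
    using measurable_from_sub[OF GM Fs] by (simp add: nn_integral_cmult)
  finally show ?thesis unfolding C_def .
qed

text \<open>The Gaussian factor from the previous lemma is at most \<open>exp (h (w\<^sup>2 + 2 a m))\<close> as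
  long as \<open>2 a h \<le> 1/2\<close>; this linearity in \<open>h = T/N\<close> makes the product of \<open>N\<close> such
  factors bounded independently of \<open>N\<close>.\<close>
lemma gaussian_factor_le_exp:
  fixes h a w :: real and m :: nat
  assumes h: "0 < h" and a: "0 \<le> a" and ah: "2 * a * h \<le> 1/2"
  shows "exp (w\<^sup>2 * h / (2 * (1 - 2 * a * h))) / sqrt (1 - 2 * a * h) ^ m
         \<le> exp (h * (w\<^sup>2 + 2 * a * real m))"
proof -
  define q where "q = 1 - 2 * a * h"
  have q1: "1/2 \<le> q" "q \<le> 1" using ah a h by (auto simp: q_def)
  have exp_part: "exp (w\<^sup>2 * h / (2 * q)) \<le> exp (w\<^sup>2 * h)"
  proof -
    have w0: "0 \<le> w\<^sup>2 * h" using h by simp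
    have "w\<^sup>2 * h * 1 \<le> w\<^sup>2 * h * (2 * q)" by (rule mult_left_mono[OF _ w0]) (use q1 in auto)
    hence "w\<^sup>2 * h / (2 * q) \<le> w\<^sup>2 * h"
      using q1 by (simp add: divide_le_eq)
    thus ?thesis by simp
  qed
  have inv_q: "1 / q \<le> exp (2 * (1 - q))"
  proof -
    have "0 \<le> (2 * q - 1) * (1 - q)" by (rule mult_nonneg_nonneg) (use q1 in auto)
    hence "1 \<le> (1 + 2 * (1 - q)) * q" by (simp add: algebra_simps)
    hence "1 / q \<le> 1 + 2 * (1 - q)"
      using q1 by (simp add: divide_le_eq)
    also have "\<dots> \<le> exp (2 * (1 - q))" by (rule exp_ge_add_one_self)
    finally show ?thesis .
  qed
  have inv_sqrt_q: "1 / sqrt q \<le> exp (1 - q)"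
  proof -
    have "1 / sqrt q = sqrt (1 / q)" by (simp add: real_sqrt_divide)
    also have "\<dots> \<le> sqrt (exp (2 * (1 - q)))" using inv_q by simp
    also have "\<dots> = exp (1 - q)"
      by (rule real_sqrt_unique) (simp_all only: exp_double[symmetric] exp_ge_zero)
    finally show ?thesis .
  qed
  have "1 / sqrt q ^ m \<le> exp (1 - q) ^ m"
    using inv_sqrt_q q1 by (simp add: power_one_over[symmetric] power_mono)
  also have "\<dots> = exp (2 * a * h * real m)" by (simp add: q_def exp_of_nat_mult[symmetric] mult_ac)
  finally have root_part: "1 / sqrt q ^ m \<le> exp (2 * a * h * real m)" .
  have "exp (w\<^sup>2 * h / (2 * q)) / sqrt q ^ m = exp (w\<^sup>2 * h / (2 * q)) * (1 / sqrt q ^ m)" by simp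
  also have "\<dots> \<le> exp (w\<^sup>2 * h) * exp (2 * a * h * real m)"
    by (rule mult_mono[OF exp_part root_part]) (use q1 in auto)
  also have "\<dots> = exp (h * (w\<^sup>2 + 2 * a * real m))" by (simp add: exp_add[symmetric] algebra_simps)
  finally show ?thesis by (simp add: q_def)
qed

lemma markov_inequality_real:
  assumes P: "prob_space M" and f: "f \<in> borel_measurable M"
    and I: "(\<integral>\<^sup>+ x. ennreal (f x) \<partial>M) \<le> ennreal C" and C: "0 \<le> C" and a: "0 < a"
  shows "measure M {x\<in>space M. a \<le> f x} \<le> C / a"
proof -
  interpret prob_space M by (rule P)
  define A where "A = {x\<in>space M. a \<le> f x}"
  have A: "A \<in> sets M" unfolding A_def using f by measurable
  have "(\<integral>\<^sup>+ x. ennreal a * indicator A x \<partial>M) \<le> (\<integral>\<^sup>+ x. ennreal (f x) \<partial>M)"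
    by (rule nn_integral_mono) (auto simp: A_def ennreal_leI split: split_indicator)
  also have "\<dots> \<le> ennreal C" by (rule I)
  finally have "ennreal (a * measure M A) \<le> ennreal C"
    using A a by (simp add: nn_integral_cmult_indicator emeasure_eq_measure ennreal_mult')
  hence "a * measure M A \<le> C" using C by (simp add: ennreal_le_iff)
  thus ?thesis using a by (simp add: A_def field_simps)
qed

lemma power_le_exp:
  fixes y :: real assumes "0 < n" "0 \<le> y"
  shows "y ^ n \<le> real n ^ n * exp y"
proof -
  have "(y / real n) ^ n \<le> (1 + y / real n) ^ n"
    using assms by (intro power_mono) auto
  also have "\<dots> \<le> exp y" using assms by (intro exp_ge_one_plus_x_over_n_power_n) auto
  finally have "real n ^ n * (y / real n) ^ n \<le> real n ^ n * exp y" by (intro mult_left_mono) auto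
  thus ?thesis using assms by (simp add: power_divide)
qed

text \<open>The hypotheses of the theorem that the tail estimate actually uses: of the drift
  only continuity is needed (for measurability of the scheme), of the diffusion
  coefficient only the Lipschitz bound (for continuity and linear growth).\<close>
locale tamed_euler_setting =
  fixes M :: "'a measure" and T c :: real and F :: "real \<Rightarrow> 'a measure"
    and W :: "real \<Rightarrow> 'a \<Rightarrow> real^'m::finite" and \<xi> :: "'a \<Rightarrow> real^'d::finite"
    and \<mu> :: "real^'d \<Rightarrow> real^'d" and \<sigma> :: "real^'d \<Rightarrow> ((real^'m) \<Rightarrow>\<^sub>L (real^'d))"
  assumes prob: "prob_space M"
    and T_pos: "0 < T"
    and filtration: "normal_filtration M T F"
    and brownian: "std_brownian_motion M T F W"
    and xi_F0: "\<xi> \<in> borel_measurable (F 0)"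
    and xi_moments: "\<forall>p\<ge>1. (\<integral>\<^sup>+ \<omega>. ennreal (norm (\<xi> \<omega>) powr p) \<partial>M) < \<infinity>"
    and c_pos: "0 < c"
    and mu_cont: "continuous_on UNIV \<mu>"
    and sigma_lipschitz: "\<forall>x y. norm (\<sigma> x - \<sigma> y) \<le> c * norm (x - y)"
begin

abbreviation Y where "Y N k \<equiv> tamed_euler T \<mu> \<sigma> W \<xi> N k"
abbreviation L where "L \<equiv> lam c T \<mu> \<sigma>"

text \<open>The bound for the vector \<open>V\<close> below.\<close>
abbreviation K where "K \<equiv> norm (\<sigma> 0) + c"

definition grid :: "nat \<Rightarrow> nat \<Rightarrow> real" where "grid N k = real k * T / real N"

lemma L_nonneg: "0 \<le> L"
  by (simp add: lam_def)

lemma filtration_sub: "t \<in> {0..T} \<Longrightarrow> space (F t) = space M \<and> sets (F t) \<subseteq> sets M"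
  using conjunct1[OF filtration[unfolded normal_filtration_def]] by (rule bspec)

lemma measurable_filtration_mono:
  assumes "f \<in> measurable (F s) N'" "0 \<le> s" "s \<le> t" "t \<le> T"
  shows "f \<in> measurable (F t) N'"
proof -
  have "sets (F s) \<subseteq> sets (F t)"
    using conjunct1[OF conjunct2[OF filtration[unfolded normal_filtration_def]]] assms(2-4) by simp
  moreover have "space (F s) = space (F t)" using filtration_sub[of s] filtration_sub[of t] assms by simp
  ultimately show ?thesis by (rule measurable_from_sub[OF assms(1), rotated])
qed

lemma measurable_filtration_M:
  assumes "f \<in> measurable (F t) N'" "t \<in> {0..T}" shows "f \<in> measurable M N'"
  using filtration_sub[OF assms(2)] by (intro measurable_from_sub[OF assms(1)]) auto

lemma grid_range: "1 \<le> N \<Longrightarrow> k \<le> N \<Longrightarrow> grid N k \<in> {0..T}"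
  using T_pos by (auto simp: grid_def field_simps)

lemma grid_mono: "j \<le> k \<Longrightarrow> grid N j \<le> grid N k"
  using T_pos by (auto simp: grid_def divide_right_mono mult_right_mono)

lemma grid_step: "1 \<le> N \<Longrightarrow> grid N (Suc k) - grid N k = T / real N"
  by (simp add: grid_def field_simps)

lemma dW_grid: "dW T W N k = (\<lambda>\<omega>. W (grid N (Suc k)) \<omega> - W (grid N k) \<omega>)"
  by (auto simp: dW_def grid_def fun_eq_iff)

lemma dW_measurable:
  assumes "1 \<le> N" "k < N" shows "dW T W N k \<in> borel_measurable (F (grid N (Suc k)))"
proof -
  have W_meas: "t \<in> {0..T} \<Longrightarrow> W t \<in> borel_measurable (F t)" for t
    using conjunct1[OF conjunct2[OF conjunct2[OF brownian[unfolded std_brownian_motion_def]]]]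
    by (rule bspec)
  have "grid N k \<in> {0..T}" "grid N (Suc k) \<in> {0..T}" "grid N k \<le> grid N (Suc k)"
    using grid_range[OF assms(1), of k] grid_range[OF assms(1), of "Suc k"] grid_mono[of k "Suc k" N] assms
    by auto
  hence "W (grid N (Suc k)) \<in> borel_measurable (F (grid N (Suc k)))"
    and "W (grid N k) \<in> borel_measurable (F (grid N (Suc k)))"
    by (auto intro!: W_meas measurable_filtration_mono[OF W_meas[of "grid N k"]])
  thus ?thesis unfolding dW_grid by (rule borel_measurable_diff)
qed

lemma dW_measurable_M: "1 \<le> N \<Longrightarrow> k < N \<Longrightarrow> dW T W N k \<in> borel_measurable M"
  using measurable_filtration_M[OF dW_measurable] grid_range[of N "Suc k"] by auto

lemma xi_measurable_M: "\<xi> \<in> borel_measurable M"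
  using measurable_filtration_M[OF xi_F0] T_pos by auto

lemma dW_gaussian:
  assumes N: "1 \<le> N" and k: "k < N"
  shows "distributed M lborel (dW T W N k)
          (\<lambda>x. ennreal (\<Prod>j\<in>UNIV. normal_density 0 (sqrt (T / real N)) (x $ j)))"
    and "\<forall>A\<in>sets (F (grid N k)). \<forall>B\<in>sets borel.
           measure M (A \<inter> (dW T W N k -` B \<inter> space M)) =
           measure M A * measure M (dW T W N k -` B \<inter> space M)"
proof -
  have increments: "\<forall>s t. 0 \<le> s \<and> s < t \<and> t \<le> T \<longrightarrow>
        distributed M lborel (\<lambda>\<omega>. W t \<omega> - W s \<omega>)
          (\<lambda>x. ennreal (\<Prod>j\<in>UNIV. normal_density 0 (sqrt (t - s)) (x $ j))) \<and>
        (\<forall>A\<in>sets (F s). \<forall>B\<in>sets borel.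
           measure M (A \<inter> ((\<lambda>\<omega>. W t \<omega> - W s \<omega>) -` B \<inter> space M)) =
           measure M A * measure M ((\<lambda>\<omega>. W t \<omega> - W s \<omega>) -` B \<inter> space M))"
    using conjunct2[OF conjunct2[OF conjunct2[OF brownian[unfolded std_brownian_motion_def]]]] .
  have "0 \<le> grid N k \<and> grid N k < grid N (Suc k) \<and> grid N (Suc k) \<le> T"
    using grid_range[OF N, of k] grid_range[OF N, of "Suc k"] k T_pos
    by (auto simp: grid_def field_simps)
  from increments[rule_format, OF this]
  have "distributed M lborel (\<lambda>\<omega>. W (grid N (Suc k)) \<omega> - W (grid N k) \<omega>)
          (\<lambda>x. ennreal (\<Prod>j\<in>UNIV. normal_density 0 (sqrt (grid N (Suc k) - grid N k)) (x $ j))) \<and>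
        (\<forall>A\<in>sets (F (grid N k)). \<forall>B\<in>sets borel.
           measure M (A \<inter> ((\<lambda>\<omega>. W (grid N (Suc k)) \<omega> - W (grid N k) \<omega>) -` B \<inter> space M)) =
           measure M A * measure M ((\<lambda>\<omega>. W (grid N (Suc k)) \<omega> - W (grid N k) \<omega>) -` B \<inter> space M))" .
  thus "distributed M lborel (dW T W N k)
          (\<lambda>x. ennreal (\<Prod>j\<in>UNIV. normal_density 0 (sqrt (T / real N)) (x $ j)))"
    and "\<forall>A\<in>sets (F (grid N k)). \<forall>B\<in>sets borel.
           measure M (A \<inter> (dW T W N k -` B \<inter> space M)) =
           measure M A * measure M (dW T W N k -` B \<inter> space M)"
    unfolding dW_grid grid_step[OF N] by auto
qed

lemma sigma_cont: "continuous_on UNIV \<sigma>"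
  unfolding continuous_on_iff
proof (intro ballI allI impI)
  fix x :: "real^'d" and e :: real assume e: "0 < e"
  show "\<exists>d>0. \<forall>x'\<in>UNIV. dist x' x < d \<longrightarrow> dist (\<sigma> x') (\<sigma> x) < e"
  proof (intro exI[of _ "e / c"] conjI ballI impI)
    show "0 < e / c" using e c_pos by simp
    fix x' assume "dist x' x < e / c"
    hence "c * dist x' x < e" using c_pos by (simp add: field_simps)
    moreover have "dist (\<sigma> x') (\<sigma> x) \<le> c * dist x' x"
      using sigma_lipschitz by (simp add: dist_norm)
    ultimately show "dist (\<sigma> x') (\<sigma> x) < e" by linarith
  qed
qed

lemma mu_cont_on[continuous_intros]: "continuous_on S f \<Longrightarrow> continuous_on S (\<lambda>x. \<mu> (f x))"
  by (rule continuous_on_compose2[OF mu_cont]) auto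

lemma sigma_cont_on[continuous_intros]: "continuous_on S f \<Longrightarrow> continuous_on S (\<lambda>x. \<sigma> (f x))"
  by (rule continuous_on_compose2[OF sigma_cont]) auto

definition euler_step :: "nat \<Rightarrow> (real^'d) \<times> (real^'m) \<Rightarrow> real^'d" where
  "euler_step N p = fst p + ((T / real N) / (1 + (T / real N) * norm (\<mu> (fst p)))) *\<^sub>R \<mu> (fst p)
                    + blinfun_apply (\<sigma> (fst p)) (snd p)"

lemma euler_step_measurable: "euler_step N \<in> borel_measurable borel"
proof -
  have "1 + T / real N * norm z \<noteq> 0" for z :: "real^'d"
  proof -
    have "0 \<le> T / real N * norm z" using T_pos by (intro mult_nonneg_nonneg) auto
    thus ?thesis by linarith
  qed
  hence "continuous_on UNIV (euler_step N)"
    unfolding euler_step_def by (intro continuous_intros blinfun.continuous_on) auto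
  thus ?thesis by (rule borel_measurable_continuous_onI)
qed

lemma Y_Suc: "Y N (Suc k) = (\<lambda>\<omega>. euler_step N (Y N k \<omega>, dW T W N k \<omega>))"
  by (simp add: euler_step_def Let_def fun_eq_iff)

lemma Y_measurable: "1 \<le> N \<Longrightarrow> k \<le> N \<Longrightarrow> Y N k \<in> borel_measurable (F (grid N k))"
proof (induction k)
  case 0
  then show ?case using xi_F0 by (simp add: grid_def)
next
  case (Suc k)
  have "grid N k \<in> {0..T}" "grid N (Suc k) \<in> {0..T}" "grid N k \<le> grid N (Suc k)"
    using grid_range[OF Suc.prems(1), of k] grid_range[OF Suc.prems(1), of "Suc k"]
      grid_mono[of k "Suc k" N] Suc.prems by auto
  hence "Y N k \<in> borel_measurable (F (grid N (Suc k)))"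
    using measurable_filtration_mono[OF Suc.IH] Suc.prems by simp
  hence "(\<lambda>\<omega>. (Y N k \<omega>, dW T W N k \<omega>)) \<in> measurable (F (grid N (Suc k))) (borel \<Otimes>\<^sub>M borel)"
    using dW_measurable Suc.prems by (intro measurable_Pair) auto
  thus ?case
    using measurable_compose[of _ _ "borel \<Otimes>\<^sub>M borel" "euler_step N" borel] euler_step_measurable
    by (simp add: Y_Suc borel_prod)
qed

subsection \<open>The representation \<open>\<alpha>\<^sub>k = \<langle>V(Y\<^sub>k), \<Delta>W\<^sub>k\<rangle>\<close>\<close>

text \<open>\<open>\<sigma>(y)\<^sup>T y\<close>, written in coordinates.\<close>
definition sigma_adj :: "real^'d \<Rightarrow> real^'m" where
  "sigma_adj y = (\<chi> j. inner y (blinfun_apply (\<sigma> y) (axis j 1)))"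

definition alpha_vec :: "real^'d \<Rightarrow> real^'m" where
  "alpha_vec y = (if 1 \<le> norm y then sigma_adj y /\<^sub>R (norm y)\<^sup>2 else 0)"

lemma inner_sigma_adj: "inner (sigma_adj y) x = inner y (blinfun_apply (\<sigma> y) x)"
proof -
  have "x = (\<Sum>i\<in>UNIV. x $ i *\<^sub>R axis i 1)"
    using basis_expansion[of x] by (simp add: scalar_mult_eq_scaleR)
  hence "inner y (blinfun_apply (\<sigma> y) x) = inner y (blinfun_apply (\<sigma> y) (\<Sum>i\<in>UNIV. x $ i *\<^sub>R axis i 1))"
    by simp
  also have "\<dots> = (\<Sum>i\<in>UNIV. x $ i * inner y (blinfun_apply (\<sigma> y) (axis i 1)))"
    by (simp add: blinfun.sum_right blinfun.scaleR_right inner_sum_right)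
  also have "\<dots> = inner (sigma_adj y) x"
    by (simp add: sigma_adj_def inner_vec_def mult.commute)
  finally show ?thesis by simp
qed

lemma alpha_eq: "alpha T \<mu> \<sigma> W \<xi> N k \<omega> = inner (alpha_vec (Y N k \<omega>)) (dW T W N k \<omega>)"
  by (simp add: alpha_def alpha_vec_def Let_def inner_sigma_adj power2_eq_square)

lemma alpha_vec_measurable: "alpha_vec \<in> borel_measurable borel"
proof -
  have "continuous_on UNIV sigma_adj"
    unfolding sigma_adj_def by (intro continuous_intros blinfun.continuous_on)
  hence [measurable]: "sigma_adj \<in> borel_measurable borel" by (rule borel_measurable_continuous_onI)
  show ?thesis unfolding alpha_vec_def[abs_def] by measurable
qed

text \<open>By linear growth of \<open>\<sigma>\<close>, \<open>|V(y)| \<le> |\<sigma>(y)|/|y| \<le> |\<sigma>(0)| + c\<close>.\<close>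
lemma alpha_vec_bound: "norm (alpha_vec y) \<le> K"
proof (cases "1 \<le> norm y")
  case False
  then show ?thesis using c_pos by (auto simp: alpha_vec_def)
next
  case True
  have ny: "0 < norm y" using True by linarith
  have sigma_growth: "norm (\<sigma> y) \<le> norm (\<sigma> 0) + c * norm y"
    using norm_triangle_sub[of "\<sigma> y" "\<sigma> 0"] sigma_lipschitz[rule_format, of y 0] by simp
  have "(norm (sigma_adj y))\<^sup>2 = inner y (blinfun_apply (\<sigma> y) (sigma_adj y))"
    by (simp add: inner_sigma_adj[symmetric] power2_norm_eq_inner)
  also have "\<dots> \<le> norm y * norm (blinfun_apply (\<sigma> y) (sigma_adj y))"
    by (rule order_trans[OF abs_ge_self Cauchy_Schwarz_ineq2])
  also have "\<dots> \<le> norm y * (norm (\<sigma> y) * norm (sigma_adj y))"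
    by (intro mult_left_mono norm_blinfun) auto
  finally have adj_bound: "norm (sigma_adj y) \<le> norm y * norm (\<sigma> y)"
    by (cases "norm (sigma_adj y) = 0") (auto simp: power2_eq_square mult_ac)
  have "norm (alpha_vec y) = norm (sigma_adj y) / (norm y)\<^sup>2"
    using True by (simp add: alpha_vec_def divide_inverse mult.commute)
  also have "\<dots> \<le> norm y * norm (\<sigma> y) / (norm y)\<^sup>2"
    using adj_bound by (simp add: divide_right_mono)
  also have "\<dots> = norm (\<sigma> y) / norm y" using ny by (simp add: power2_eq_square)
  also have "\<dots> \<le> (norm (\<sigma> 0) + c * norm y) / norm y"
    using sigma_growth ny by (simp add: divide_right_mono)
  also have "\<dots> = norm (\<sigma> 0) / norm y + c" using ny by (simp add: field_simps)
  also have "\<dots> \<le> K"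
    using True ny by (simp add: divide_le_eq mult_le_cancel_left1)
  finally show ?thesis .
qed

section \<open>Exponential moments of the sums \<open>S\<^sub>u\<^sub>,\<^sub>k\<close>\<close>

definition incr :: "nat \<Rightarrow> nat \<Rightarrow> 'a \<Rightarrow> real" where
  "incr N j \<omega> = L * (norm (dW T W N j \<omega>))\<^sup>2 + alpha T \<mu> \<sigma> W \<xi> N j \<omega>"

definition Ssum :: "nat \<Rightarrow> nat \<Rightarrow> nat \<Rightarrow> 'a \<Rightarrow> real" where
  "Ssum N u k \<omega> = (\<Sum>j\<in>{u..<k}. incr N j \<omega>)"

text \<open>The exponential growth rate of \<open>E exp (\<theta> S\<^sub>u\<^sub>,\<^sub>k)\<close> per unit of time.\<close>
definition rate :: "real \<Rightarrow> real" where
  "rate \<theta> = (\<theta> * K)\<^sup>2 + 2 * (\<theta> * L) * real CARD('m)"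

lemma rate_nonneg: "0 \<le> \<theta> \<Longrightarrow> 0 \<le> rate \<theta>"
  using L_nonneg by (simp add: rate_def)

lemma Dn_eq_Ssum:
  "Dn c T \<mu> \<sigma> W \<xi> N k \<omega> = (L + norm (\<xi> \<omega>)) * exp (L + Max ((\<lambda>u. Ssum N u k \<omega>) ` {0..k}))"
  by (simp add: Dn_def Ssum_def incr_def Let_def)

lemma Ssum_Suc: "u \<le> k \<Longrightarrow> Ssum N u (Suc k) \<omega> = Ssum N u k \<omega> + incr N k \<omega>"
  by (simp add: Ssum_def)

lemma Ssum_empty: "Ssum N u u \<omega> = 0"
  by (simp add: Ssum_def)

lemma incr_measurable:
  assumes N: "1 \<le> N" and jk: "j < k" "k \<le> N"
  shows "incr N j \<in> borel_measurable (F (grid N k))"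
proof -
  have r: "0 \<le> grid N j" "grid N j \<le> grid N (Suc j)" "grid N (Suc j) \<le> grid N k" "grid N k \<le> T"
    using grid_range[OF N, of j] grid_range[OF N, of k] grid_mono[of j "Suc j" N]
      grid_mono[of "Suc j" k N] jk by auto
  have "Y N j \<in> borel_measurable (F (grid N (Suc j)))"
    using measurable_filtration_mono[OF Y_measurable[OF N, of j]] r jk by simp
  hence [measurable]: "Y N j \<in> borel_measurable (F (grid N k))"
    by (rule measurable_filtration_mono) (use r in linarith)+
  have [measurable]: "dW T W N j \<in> borel_measurable (F (grid N k))"
    using measurable_filtration_mono[OF dW_measurable[OF N, of j]] r jk by simp
  have [measurable]: "alpha_vec \<in> borel_measurable borel" by (rule alpha_vec_measurable)
  show ?thesis unfolding incr_def alpha_eq[abs_def] by measurable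
qed

lemma Ssum_measurable: "1 \<le> N \<Longrightarrow> k \<le> N \<Longrightarrow> Ssum N u k \<in> borel_measurable (F (grid N k))"
  unfolding Ssum_def[abs_def] by (rule borel_measurable_sum) (use incr_measurable in auto)

lemma Ssum_measurable_M: "1 \<le> N \<Longrightarrow> k \<le> N \<Longrightarrow> Ssum N u k \<in> borel_measurable M"
  using measurable_filtration_M[OF Ssum_measurable] grid_range by blast

text \<open>One step: conditionally on \<open>F(t\<^sub>k)\<close>, the new summand \<open>\<theta> (\<lambda> |\<Delta>W\<^sub>k|\<^sup>2 + \<langle>V(Y\<^sub>k), \<Delta>W\<^sub>k\<rangle>)\<close>
  is an exponential of a quadratic in the Gaussian \<open>\<Delta>W\<^sub>k\<close> with bounded linear part, so
  it costs a factor \<open>exp (T/N \<cdot> rate \<theta>)\<close>, provided \<open>N \<ge> 4 \<theta> \<lambda> T\<close>.\<close>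
lemma Ssum_exp_moment_step:
  assumes N: "1 \<le> N" and \<theta>: "0 \<le> \<theta>" and big: "4 * \<theta> * L * T \<le> real N"
    and uk: "u \<le> k" and kN: "k < N"
  shows "(\<integral>\<^sup>+ \<omega>. ennreal (exp (\<theta> * Ssum N u (Suc k) \<omega>)) \<partial>M)
         \<le> ennreal (exp (T / real N * rate \<theta>)) * (\<integral>\<^sup>+ \<omega>. ennreal (exp (\<theta> * Ssum N u k \<omega>)) \<partial>M)"
proof -
  define h where "h = T / real N"
  define V where "V = (\<lambda>\<omega>. \<theta> *\<^sub>R alpha_vec (Y N k \<omega>))"
  have h_pos: "0 < h" using T_pos N by (simp add: h_def)
  have small: "2 * (\<theta> * L) * h \<le> 1/2"
  proof -
    have "4 * (\<theta> * L * T) \<le> real N" using big by (simp add: mult_ac)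
    hence "2 * (\<theta> * L) * T / real N \<le> 1/2" using N by (simp add: divide_le_eq)
    thus ?thesis by (simp add: h_def)
  qed
  have Fs: "space (F (grid N k)) = space M" "sets (F (grid N k)) \<subseteq> sets M"
    using filtration_sub grid_range[OF N, of k] kN by auto
  have GM: "(\<lambda>\<omega>. exp (\<theta> * Ssum N u k \<omega>)) \<in> borel_measurable (F (grid N k))"
    using Ssum_measurable[OF N less_imp_le[OF kN], of u] by measurable
  have VM: "V \<in> borel_measurable (F (grid N k))"
    using measurable_compose[OF Y_measurable[OF N less_imp_le[OF kN]] alpha_vec_measurable]
    unfolding V_def by measurable
  have VK: "norm (V \<omega>) \<le> \<theta> * K" for \<omega>
    using alpha_vec_bound[of "Y N k \<omega>"] \<theta> by (simp add: V_def mult_left_mono)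
  have split: "exp (\<theta> * Ssum N u (Suc k) \<omega>)
      = exp (\<theta> * Ssum N u k \<omega>) * exp (\<theta> * L * (norm (dW T W N k \<omega>))\<^sup>2 + inner (V \<omega>) (dW T W N k \<omega>))"
    for \<omega>
    unfolding Ssum_Suc[OF uk] incr_def alpha_eq V_def inner_scaleR_left exp_add[symmetric]
    by (simp add: algebra_simps)
  have "(\<integral>\<^sup>+ \<omega>. ennreal (exp (\<theta> * Ssum N u (Suc k) \<omega>)) \<partial>M)
      \<le> ennreal (exp ((\<theta> * K)\<^sup>2 * h / (2 * (1 - 2 * (\<theta> * L) * h))) / sqrt (1 - 2 * (\<theta> * L) * h) ^ CARD('m))
        * (\<integral>\<^sup>+ \<omega>. ennreal (exp (\<theta> * Ssum N u k \<omega>)) \<partial>M)"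
    unfolding split
    by (rule nn_integral_exp_quadratic_indep_le[OF prob Fs GM VM _ VK h_pos _
          dW_gaussian(1)[OF N kN, folded h_def] dW_gaussian(2)[OF N kN]])
       (use small in simp_all)
  also have "\<dots> \<le> ennreal (exp (T / real N * rate \<theta>)) * (\<integral>\<^sup>+ \<omega>. ennreal (exp (\<theta> * Ssum N u k \<omega>)) \<partial>M)"
    using gaussian_factor_le_exp[OF h_pos _ small, of "\<theta> * K" "CARD('m)"] \<theta> L_nonneg
    by (intro mult_right_mono ennreal_leI) (simp_all add: rate_def h_def)
  finally show ?thesis .
qed

lemma Ssum_exp_moment:
  assumes N: "1 \<le> N" and \<theta>: "0 \<le> \<theta>" and big: "4 * \<theta> * L * T \<le> real N"
    and uk: "u \<le> k" and kN: "k \<le> N"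
  shows "(\<integral>\<^sup>+ \<omega>. ennreal (exp (\<theta> * Ssum N u k \<omega>)) \<partial>M) \<le> ennreal (exp (T * rate \<theta>))"
proof -
  interpret prob_space M by (rule prob)
  define B where "B = exp (T / real N * rate \<theta>)"
  have B1: "1 \<le> B"
    using T_pos rate_nonneg[OF \<theta>] by (simp add: B_def)
  have "(\<integral>\<^sup>+ \<omega>. ennreal (exp (\<theta> * Ssum N u (u + i) \<omega>)) \<partial>M) \<le> ennreal (B ^ i)"
    if "u + i \<le> N" for i
    using that
  proof (induction i)
    case 0
    show ?case by (simp add: Ssum_empty emeasure_space_1)
  next
    case (Suc i)
    have "(\<integral>\<^sup>+ \<omega>. ennreal (exp (\<theta> * Ssum N u (Suc (u + i)) \<omega>)) \<partial>M)
        \<le> ennreal B * (\<integral>\<^sup>+ \<omega>. ennreal (exp (\<theta> * Ssum N u (u + i) \<omega>)) \<partial>M)"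
      unfolding B_def using Suc.prems by (intro Ssum_exp_moment_step[OF N \<theta> big]) auto
    also have "\<dots> \<le> ennreal B * ennreal (B ^ i)"
      using Suc by (intro mult_left_mono) auto
    finally show ?case
      using B1 by (simp add: ennreal_mult'[symmetric] mult.commute)
  qed
  from this[of "k - u"] have "(\<integral>\<^sup>+ \<omega>. ennreal (exp (\<theta> * Ssum N u k \<omega>)) \<partial>M) \<le> ennreal (B ^ (k - u))"
    using uk kN by simp
  also have "B ^ (k - u) \<le> B ^ N"
    using B1 kN by (intro power_increasing) auto
  also have "B ^ N = exp (T * rate \<theta>)"
    using N by (simp add: B_def exp_of_nat_mult[symmetric])
  finally show ?thesis by (simp add: ennreal_leI)
qed

section \<open>Covering the complement of \<open>\<Omega>\<^sup>N\<^sub>N\<close>\<close>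

text \<open>The exponent \<open>r = 1/(2c)\<close> of the threshold \<open>N\<^sup>r\<close> for \<open>D\<^sub>k\<close> and the level \<open>y\<^sub>N\<close> for
  \<open>|\<xi>|\<close> at which the threshold splits evenly between the two factors of \<open>D\<^sub>k\<close>.\<close>
definition r_exp :: real where "r_exp = 1 / (2 * c)"
definition xi_level :: "nat \<Rightarrow> real" where "xi_level N = real N powr (r_exp / 2) * exp (- L) / 2"

lemma r_exp_pos: "0 < r_exp"
  using c_pos by (simp add: r_exp_def)

text \<open>The index pairs \<open>(u,k)\<close> of the sums \<open>S\<^sub>u\<^sub>,\<^sub>k\<close> entering some \<open>D\<^sub>k\<close>, \<open>k < N\<close>.\<close>
definition pairs :: "nat \<Rightarrow> (nat \<times> nat) set" where "pairs N = {(u, k). u \<le> k \<and> k < N}"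

lemma pairs_finite_card: "finite (pairs N) \<and> card (pairs N) \<le> N * N"
proof -
  have sub: "pairs N \<subseteq> {..<N} \<times> {..<N}" by (auto simp: pairs_def)
  hence "card (pairs N) \<le> card ({..<N} \<times> {..<N})" by (intro card_mono) auto
  thus ?thesis using finite_subset[OF sub] by (simp add: card_cartesian_product)
qed

text \<open>Outside \<open>\<Omega>\<^sup>N\<^sub>N\<close>, once \<open>\<lambda> \<le> y\<^sub>N\<close>: either \<open>|\<xi>|\<close> is large, or some increment is
  large, or some \<open>S\<^sub>u\<^sub>,\<^sub>k\<close> exceeds \<open>(r/2) ln N\<close>; otherwise
  \<open>D\<^sub>k \<le> 2 y\<^sub>N exp (\<lambda> + (r/2) ln N) = N\<^sup>r\<close> for all \<open>k\<close>.\<close>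
lemma complement_Omega_subset:
  assumes N: "1 \<le> N" and Ly: "L \<le> xi_level N"
  shows "space M - OmegaN M c T \<mu> \<sigma> W \<xi> N N \<subseteq>
     {\<omega>\<in>space M. xi_level N \<le> norm (\<xi> \<omega>)}
     \<union> (\<Union>k\<in>{..<N}. {\<omega>\<in>space M. 1 \<le> norm (dW T W N k \<omega>)})
     \<union> (\<Union>(u, k)\<in>pairs N. {\<omega>\<in>space M. r_exp / 2 * ln (real N) \<le> Ssum N u k \<omega>})"
    (is "_ \<subseteq> ?Ex \<union> ?EW \<union> ?ES")
proof
  fix \<omega> assume \<omega>: "\<omega> \<in> space M - OmegaN M c T \<mu> \<sigma> W \<xi> N N"
  then consider k where "k < N" "real N powr r_exp < Dn c T \<mu> \<sigma> W \<xi> N k \<omega>"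
    | k where "k < N" "1 < norm (dW T W N k \<omega>)"
    unfolding r_exp_def by (force simp: OmegaN_def)
  thus "\<omega> \<in> ?Ex \<union> ?EW \<union> ?ES"
  proof cases
    case (2 k)
    hence "\<omega> \<in> ?EW" using \<omega> by (intro UN_I[of k]) auto
    thus ?thesis by blast
  next
    case (1 k)
    show ?thesis
    proof (rule ccontr)
      assume none: "\<omega> \<notin> ?Ex \<union> ?EW \<union> ?ES"
      hence xi: "norm (\<xi> \<omega>) < xi_level N" using \<omega> by auto
      have S: "Ssum N u k \<omega> < r_exp / 2 * ln (real N)" if "u \<le> k" for u
      proof -
        have "(u, k) \<in> pairs N" using that 1(1) by (simp add: pairs_def)
        hence "\<omega> \<notin> {\<omega>\<in>space M. r_exp / 2 * ln (real N) \<le> Ssum N u k \<omega>}"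
          using none by blast
        thus ?thesis using \<omega> by auto
      qed
      have "Max ((\<lambda>u. Ssum N u k \<omega>) ` {0..k}) \<le> r_exp / 2 * ln (real N)"
        using S by (subst Max_le_iff) (auto intro: less_imp_le)
      hence "Dn c T \<mu> \<sigma> W \<xi> N k \<omega> \<le> (2 * xi_level N) * exp (L + r_exp / 2 * ln (real N))"
        unfolding Dn_eq_Ssum using xi Ly norm_ge_zero[of "\<xi> \<omega>"]
        by (intro mult_mono) (auto simp: xi_level_def)
      also have "\<dots> = real N powr (r_exp / 2) * real N powr (r_exp / 2)"
      proof -
        have "exp (L + r_exp / 2 * ln (real N)) = exp L * real N powr (r_exp / 2)"
          using N by (simp add: exp_add powr_def mult.commute)
        moreover have "exp (- L) * exp L = 1" by (simp add: exp_minus_inverse mult.commute)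
        ultimately show ?thesis by (simp add: xi_level_def algebra_simps)
      qed
      also have "\<dots> = real N powr r_exp" by (simp add: powr_add[symmetric])
      finally show False using 1(2) by simp
    qed
  qed
qed

section \<open>Tail bounds for the three events\<close>

lemma xi_tail_bound:
  assumes q: "1 \<le> q" and y: "0 < y"
  shows "measure M {\<omega>\<in>space M. y \<le> norm (\<xi> \<omega>)}
     \<le> enn2real (\<integral>\<^sup>+ \<omega>. ennreal (norm (\<xi> \<omega>) powr q) \<partial>M) / y powr q"
proof -
  interpret prob_space M by (rule prob)
  have "(\<integral>\<^sup>+ \<omega>. ennreal (norm (\<xi> \<omega>) powr q) \<partial>M) < \<infinity>" using xi_moments q by blast
  hence I: "(\<integral>\<^sup>+ \<omega>. ennreal (norm (\<xi> \<omega>) powr q) \<partial>M)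
      \<le> ennreal (enn2real (\<integral>\<^sup>+ \<omega>. ennreal (norm (\<xi> \<omega>) powr q) \<partial>M))"
    by simp
  have fM: "(\<lambda>\<omega>. norm (\<xi> \<omega>) powr q) \<in> borel_measurable M"
    using xi_measurable_M by measurable
  have "{\<omega>\<in>space M. y \<le> norm (\<xi> \<omega>)} \<subseteq> {\<omega>\<in>space M. y powr q \<le> norm (\<xi> \<omega>) powr q}"
    using y q by (auto intro: powr_mono2)
  hence "measure M {\<omega>\<in>space M. y \<le> norm (\<xi> \<omega>)}
      \<le> measure M {\<omega>\<in>space M. y powr q \<le> norm (\<xi> \<omega>) powr q}"
    using fM by (intro finite_measure_mono) auto
  also have "\<dots> \<le> enn2real (\<integral>\<^sup>+ \<omega>. ennreal (norm (\<xi> \<omega>) powr q) \<partial>M) / y powr q"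
    using y by (intro markov_inequality_real[OF prob fM I enn2real_nonneg]) simp
  finally show ?thesis .
qed

text \<open>Large increment: \<open>E exp (N |\<Delta>W\<^sub>k|\<^sup>2 / (4T)) = 2\<^sup>m\<^sup>/\<^sup>2\<close>, hence exponential decay in \<open>N\<close>.\<close>
lemma increment_tail_bound:
  assumes N: "1 \<le> N" and kN: "k < N"
  shows "measure M {\<omega>\<in>space M. 1 \<le> norm (dW T W N k \<omega>)}
     \<le> (1 / sqrt (1/2) ^ CARD('m)) / exp (real N / (4 * T))"
proof -
  interpret prob_space M by (rule prob)
  define a where "a = real N / (4 * T)"
  define h where "h = T / real N"
  have h_pos: "0 < h" and a_pos: "0 < a" using T_pos N by (simp_all add: a_def h_def)
  have q: "1 - 2 * a * h = 1/2" using T_pos N by (simp add: a_def h_def field_simps)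
  have Fs: "space (F (grid N k)) = space M" "sets (F (grid N k)) \<subseteq> sets M"
    using filtration_sub grid_range[OF N, of k] kN by auto
  have "(\<integral>\<^sup>+ \<omega>. ennreal (1 * exp (a * (norm (dW T W N k \<omega>))\<^sup>2 + inner 0 (dW T W N k \<omega>))) \<partial>M)
     \<le> ennreal (exp (0\<^sup>2 * h / (2 * (1 - 2 * a * h))) / sqrt (1 - 2 * a * h) ^ CARD('m))
        * (\<integral>\<^sup>+ \<omega>. ennreal 1 \<partial>M)"
    by (rule nn_integral_exp_quadratic_indep_le[OF prob Fs _ _ _ _ h_pos _
          dW_gaussian(1)[OF N kN, folded h_def] dW_gaussian(2)[OF N kN]]) (auto simp: q)
  hence I: "(\<integral>\<^sup>+ \<omega>. ennreal (exp (a * (norm (dW T W N k \<omega>))\<^sup>2)) \<partial>M)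
      \<le> ennreal (1 / sqrt (1/2) ^ CARD('m))"
    by (simp add: q emeasure_space_1)
  have fM: "(\<lambda>\<omega>. exp (a * (norm (dW T W N k \<omega>))\<^sup>2)) \<in> borel_measurable M"
    using dW_measurable_M[OF N kN] by measurable
  have "{\<omega>\<in>space M. 1 \<le> norm (dW T W N k \<omega>)}
      \<subseteq> {\<omega>\<in>space M. exp a \<le> exp (a * (norm (dW T W N k \<omega>))\<^sup>2)}"
    using a_pos by (auto simp: one_le_power)
  hence "measure M {\<omega>\<in>space M. 1 \<le> norm (dW T W N k \<omega>)}
      \<le> measure M {\<omega>\<in>space M. exp a \<le> exp (a * (norm (dW T W N k \<omega>))\<^sup>2)}"
    using fM by (intro finite_measure_mono) (auto simp del: exp_le_cancel_iff)
  also have "\<dots> \<le> (1 / sqrt (1/2) ^ CARD('m)) / exp a"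
    by (rule markov_inequality_real[OF prob fM I]) auto
  finally show ?thesis by (simp add: a_def)
qed

text \<open>Large sum: Chernoff bound from the uniform exponential moment.\<close>
lemma Ssum_tail_bound:
  assumes N: "1 \<le> N" and \<theta>: "0 < \<theta>" and big: "4 * \<theta> * L * T \<le> real N"
    and uk: "u \<le> k" and kN: "k \<le> N"
  shows "measure M {\<omega>\<in>space M. t \<le> Ssum N u k \<omega>} \<le> exp (T * rate \<theta>) / exp (\<theta> * t)"
proof -
  have fM: "(\<lambda>\<omega>. exp (\<theta> * Ssum N u k \<omega>)) \<in> borel_measurable M"
    using Ssum_measurable_M[OF N kN] by measurable
  have "{\<omega>\<in>space M. t \<le> Ssum N u k \<omega>} = {\<omega>\<in>space M. exp (\<theta> * t) \<le> exp (\<theta> * Ssum N u k \<omega>)}"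
    using \<theta> by auto
  thus ?thesis
    by (simp only:) (rule markov_inequality_real[OF prob fM Ssum_exp_moment[OF N less_imp_le[OF \<theta>] big uk kN]]; simp)
qed

text \<open>Moment order \<open>q\<close> with \<open>r q/2 \<ge> p\<close> compensates the factor \<open>N\<^sup>p\<close>.\<close>
lemma xi_tail_scaled:
  assumes N: "1 \<le> N" and q: "1 \<le> q" and pq: "p \<le> r_exp / 2 * q"
  shows "real N powr p * measure M {\<omega>\<in>space M. xi_level N \<le> norm (\<xi> \<omega>)}
     \<le> enn2real (\<integral>\<^sup>+ \<omega>. ennreal (norm (\<xi> \<omega>) powr q) \<partial>M) * (2 * exp L) powr q"
proof -
  define E where "E = enn2real (\<integral>\<^sup>+ \<omega>. ennreal (norm (\<xi> \<omega>) powr q) \<partial>M)"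
  have N_pos: "0 < real N" using N by simp
  have y_pos: "0 < xi_level N" using N_pos by (simp add: xi_level_def)
  have level_powr: "xi_level N powr q * (2 * exp L) powr q = real N powr (r_exp / 2 * q)"
  proof -
    have "xi_level N * (2 * exp L) = real N powr (r_exp / 2)"
      by (simp add: xi_level_def exp_minus field_simps)
    thus ?thesis by (simp add: powr_mult[symmetric] powr_powr)
  qed
  have "real N powr p * measure M {\<omega>\<in>space M. xi_level N \<le> norm (\<xi> \<omega>)}
      \<le> real N powr (r_exp / 2 * q) * (E / xi_level N powr q)"
    unfolding E_def
    by (rule mult_mono[OF powr_mono[OF pq] xi_tail_bound[OF q y_pos]]) (use N in auto)
  also have "\<dots> = (xi_level N powr q * (2 * exp L) powr q) * (E / xi_level N powr q)"
    by (simp only: level_powr)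
  also have "\<dots> = E * (2 * exp L) powr q"
    using y_pos by (simp add: field_simps)
  finally show ?thesis by (simp add: E_def)
qed

text \<open>\<open>N\<^sup>p\<^sup>+\<^sup>1 e\<^sup>-\<^sup>N\<^sup>/\<^sup>(\<^sup>4\<^sup>T\<^sup>)\<close> is bounded, via \<open>z\<^sup>n \<le> n\<^sup>n e\<^sup>z\<close> with \<open>n \<ge> p + 1\<close>.\<close>
lemma increment_tails_scaled:
  assumes N: "1 \<le> N" and n: "0 < n" "p + 1 \<le> real n"
  shows "real N powr p * (\<Sum>k<N. measure M {\<omega>\<in>space M. 1 \<le> norm (dW T W N k \<omega>)})
     \<le> (1 / sqrt (1/2) ^ CARD('m)) * ((4 * T) ^ n * real n ^ n)"
proof -
  define C :: real where "C = 1 / sqrt (1/2) ^ CARD('m)"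
  define z where "z = real N / (4 * T)"
  have N_pos: "0 < real N" using N by simp
  have z0: "0 \<le> z" using N_pos T_pos by (simp add: z_def)
  have sum_bound: "(\<Sum>k<N. measure M {\<omega>\<in>space M. 1 \<le> norm (dW T W N k \<omega>)}) \<le> real N * (C / exp z)"
    using sum_mono[of "{..<N}" _ "\<lambda>_. C / exp z"] increment_tail_bound[OF N]
    by (simp add: C_def z_def)
  have "real N powr p * real N = real N powr (p + 1)" using N_pos by (simp add: powr_add)
  also have "\<dots> \<le> real N powr real n" by (rule powr_mono) (use n N in auto)
  also have "\<dots> = (4 * T) ^ n * z ^ n" using N_pos T_pos by (simp add: powr_realpow z_def power_divide)
  also have "\<dots> \<le> (4 * T) ^ n * (real n ^ n * exp z)"
    using T_pos by (intro mult_left_mono power_le_exp n z0) auto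
  finally have growth: "real N powr p * real N \<le> (4 * T) ^ n * (real n ^ n * exp z)" .
  have "real N powr p * (\<Sum>k<N. measure M {\<omega>\<in>space M. 1 \<le> norm (dW T W N k \<omega>)})
      \<le> (real N powr p * real N) * (C / exp z)"
    using mult_left_mono[OF sum_bound, of "real N powr p"] by simp
  also have "\<dots> \<le> (4 * T) ^ n * (real n ^ n * exp z) * (C / exp z)"
    by (rule mult_right_mono[OF growth]) (simp add: C_def)
  also have "\<dots> = C * ((4 * T) ^ n * real n ^ n)" by simp
  finally show ?thesis by (simp add: C_def)
qed

text \<open>Each of the at most \<open>N\<^sup>2\<close> events has probability \<open>O(N\<^sup>-\<^sup>p\<^sup>-\<^sup>2)\<close> when \<open>\<theta> r/2 = p + 2\<close>.\<close>
lemma Ssum_tails_scaled: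
  assumes N: "1 \<le> N" and \<theta>: "0 < \<theta>" and big: "4 * \<theta> * L * T \<le> real N"
    and \<theta>p: "\<theta> * (r_exp / 2) = p + 2"
  shows "real N powr p * (\<Sum>(u, k)\<in>pairs N.
            measure M {\<omega>\<in>space M. r_exp / 2 * ln (real N) \<le> Ssum N u k \<omega>})
     \<le> exp (T * rate \<theta>)"
proof -
  define B where "B = exp (T * rate \<theta>)"
  have N_pos: "0 < real N" using N by simp
  have threshold: "exp (\<theta> * (r_exp / 2 * ln (real N))) = real N powr (p + 2)"
  proof -
    have "\<theta> * (r_exp / 2 * ln (real N)) = (p + 2) * ln (real N)"
      using \<theta>p by (simp add: mult.assoc[symmetric])
    thus ?thesis using N_pos by (simp add: powr_def)
  qed
  have NN: "real N powr (p + 2) = real N powr p * (real N * real N)"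
    using N_pos by (simp add: powr_add power2_eq_square)
  have "(\<Sum>(u, k)\<in>pairs N. measure M {\<omega>\<in>space M. r_exp / 2 * ln (real N) \<le> Ssum N u k \<omega>})
      \<le> (\<Sum>(u, k)\<in>pairs N. B / real N powr (p + 2))"
  proof (rule sum_mono, clarify)
    fix u k assume "(u, k) \<in> pairs N"
    hence "u \<le> k" "k \<le> N" by (auto simp: pairs_def)
    from Ssum_tail_bound[OF N \<theta> big this, of "r_exp / 2 * ln (real N)"]
    show "measure M {\<omega>\<in>space M. r_exp / 2 * ln (real N) \<le> Ssum N u k \<omega>} \<le> B / real N powr (p + 2)"
      unfolding threshold B_def .
  qed
  also have "\<dots> = real (card (pairs N)) * (B / real N powr (p + 2))" by simp
  also have "\<dots> \<le> real N * real N * (B / real N powr (p + 2))"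
  proof (rule mult_right_mono)
    have "card (pairs N) \<le> N * N" using pairs_finite_card by blast
    hence "real (card (pairs N)) \<le> real (N * N)" by (rule of_nat_mono)
    thus "real (card (pairs N)) \<le> real N * real N" by simp
  qed (simp add: B_def)
  finally have "real N powr p * (\<Sum>(u, k)\<in>pairs N.
        measure M {\<omega>\<in>space M. r_exp / 2 * ln (real N) \<le> Ssum N u k \<omega>})
      \<le> real N powr p * (real N * real N * (B / real N powr (p + 2)))"
    by (rule mult_left_mono) simp
  also have "\<dots> = B" unfolding NN using N_pos by (simp add: field_simps)
  finally show ?thesis by (simp add: B_def)
qed

text \<open>The union bound applied to the covering of the complement of \<open>\<Omega>\<^sup>N\<^sub>N\<close>.\<close>
lemma complement_Omega_measure_le:
  assumes N: "1 \<le> N" and Ly: "L \<le> xi_level N"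
  shows "measure M (space M - OmegaN M c T \<mu> \<sigma> W \<xi> N N)
     \<le> measure M {\<omega>\<in>space M. xi_level N \<le> norm (\<xi> \<omega>)}
       + (\<Sum>k<N. measure M {\<omega>\<in>space M. 1 \<le> norm (dW T W N k \<omega>)})
       + (\<Sum>(u, k)\<in>pairs N. measure M {\<omega>\<in>space M. r_exp / 2 * ln (real N) \<le> Ssum N u k \<omega>})"
proof -
  interpret prob_space M by (rule prob)
  define Ex where "Ex = {\<omega>\<in>space M. xi_level N \<le> norm (\<xi> \<omega>)}"
  define EW where "EW = (\<lambda>k. {\<omega>\<in>space M. 1 \<le> norm (dW T W N k \<omega>)})"
  define ES where "ES = (\<lambda>(u, k). {\<omega>\<in>space M. r_exp / 2 * ln (real N) \<le> Ssum N u k \<omega>})"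
  have fin: "finite (pairs N)" using pairs_finite_card by blast
  have Ex_M: "Ex \<in> sets M" unfolding Ex_def using xi_measurable_M by measurable
  have EW_M: "EW k \<in> sets M" if "k < N" for k
    unfolding EW_def using dW_measurable_M[OF N that] by measurable
  have ES_M: "ES x \<in> sets M" if x_pair: "x \<in> pairs N" for x
  proof -
    obtain u k where x: "x = (u, k)" "k \<le> N" using x_pair by (cases x) (auto simp: pairs_def)
    have [measurable]: "Ssum N u k \<in> borel_measurable M" using Ssum_measurable_M[OF N x(2)] .
    show ?thesis unfolding ES_def x(1) prod.case by measurable
  qed
  have "measure M (space M - OmegaN M c T \<mu> \<sigma> W \<xi> N N) \<le> measure M (Ex \<union> (\<Union>k<N. EW k) \<union> (\<Union>x\<in>pairs N. ES x))"
    using complement_Omega_subset[OF N Ly] Ex_M EW_M ES_M fin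
    by (intro finite_measure_mono) (auto simp: Ex_def EW_def ES_def)
  also have "\<dots> \<le> measure M Ex + measure M (\<Union>k<N. EW k) + measure M (\<Union>x\<in>pairs N. ES x)"
    using Ex_M EW_M ES_M fin
    by (intro order_trans[OF measure_subadditive] add_right_mono measure_subadditive) auto
  also have "\<dots> \<le> measure M Ex + (\<Sum>k<N. measure M (EW k)) + (\<Sum>x\<in>pairs N. measure M (ES x))"
    using EW_M ES_M fin
    by (intro add_mono order_refl finite_measure_subadditive_finite) auto
  finally show ?thesis
    by (simp add: Ex_def EW_def ES_def case_prod_unfold)
qed

lemma L_le_xi_level:
  assumes "(2 * L * exp L) powr (2 / r_exp) \<le> real N"
  shows "L \<le> xi_level N"
proof -
  have "2 * L * exp L = ((2 * L * exp L) powr (2 / r_exp)) powr (r_exp / 2)"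
    using r_exp_pos L_nonneg by (simp add: powr_powr)
  also have "\<dots> \<le> real N powr (r_exp / 2)"
    using assms r_exp_pos by (intro powr_mono2) auto
  finally have "2 * L * exp L * (exp (- L) / 2) \<le> real N powr (r_exp / 2) * (exp (- L) / 2)"
    by (intro mult_right_mono) auto
  thus ?thesis by (simp add: xi_level_def exp_minus field_simps)
qed

lemma complement_Omega_scaled_le:
  assumes N: "1 \<le> N" and Ly: "L \<le> xi_level N"
    and q: "1 \<le> q" "p \<le> r_exp / 2 * q"
    and n: "0 < n" "p + 1 \<le> real n"
    and \<theta>: "0 < \<theta>" "\<theta> * (r_exp / 2) = p + 2" and big: "4 * \<theta> * L * T \<le> real N"
  shows "real N powr p * measure M (space M - OmegaN M c T \<mu> \<sigma> W \<xi> N N)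
     \<le> enn2real (\<integral>\<^sup>+ \<omega>. ennreal (norm (\<xi> \<omega>) powr q) \<partial>M) * (2 * exp L) powr q
       + (1 / sqrt (1/2) ^ CARD('m)) * ((4 * T) ^ n * real n ^ n)
       + exp (T * rate \<theta>)"
  using mult_left_mono[OF complement_Omega_measure_le[OF N Ly], of "real N powr p"]
    xi_tail_scaled[OF N q] increment_tails_scaled[OF N n] Ssum_tails_scaled[OF N \<theta>(1) big \<theta>(2)]
  by (simp add: distrib_left)

text \<open>Small \<open>N\<close> are handled trivially (probabilities are at most 1); for large \<open>N\<close>
  the previous lemma applies with \<open>q, n, \<theta>\<close> chosen depending on \<open>p\<close> only.\<close>
theorem complement_Omega_bounded:
  assumes p: "1 \<le> p"
  shows "bdd_above ((\<lambda>N. real N powr p * measure M (space M - OmegaN M c T \<mu> \<sigma> W \<xi> N N)) ` {1..})"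
proof -
  interpret prob_space M by (rule prob)
  define q where "q = max 1 (2 * p / r_exp)"
  define n where "n = nat \<lceil>p + 1\<rceil>"
  define \<theta> where "\<theta> = 2 * (p + 2) / r_exp"
  define N0 where "N0 = nat \<lceil>max (4 * \<theta> * L * T) ((2 * L * exp L) powr (2 / r_exp))\<rceil>"
  define C where "C = enn2real (\<integral>\<^sup>+ \<omega>. ennreal (norm (\<xi> \<omega>) powr q) \<partial>M) * (2 * exp L) powr q
       + (1 / sqrt (1/2) ^ CARD('m)) * ((4 * T) ^ n * real n ^ n) + exp (T * rate \<theta>)"
  have q: "1 \<le> q" "p \<le> r_exp / 2 * q"
    using r_exp_pos by (auto simp: q_def max_def field_simps)
  have n: "0 < n" "p + 1 \<le> real n" using p unfolding n_def by linarith+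
  have \<theta>: "0 < \<theta>" "\<theta> * (r_exp / 2) = p + 2" using r_exp_pos p by (simp_all add: \<theta>_def)
  show ?thesis
  proof (rule bdd_aboveI2)
    fix N :: nat assume "N \<in> {1..}"
    hence N: "1 \<le> N" by simp
    show "real N powr p * measure M (space M - OmegaN M c T \<mu> \<sigma> W \<xi> N N) \<le> max (real N0 powr p) C"
    proof (cases "N \<le> N0")
      case True
      have "real N powr p * measure M (space M - OmegaN M c T \<mu> \<sigma> W \<xi> N N) \<le> real N0 powr p * 1"
        using True p by (intro mult_mono powr_mono2) auto
      thus ?thesis by simp
    next
      case False
      hence "max (4 * \<theta> * L * T) ((2 * L * exp L) powr (2 / r_exp)) \<le> real N"
        unfolding N0_def by linarith
      hence "L \<le> xi_level N" and "4 * \<theta> * L * T \<le> real N"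
        using L_le_xi_level by auto
      thus ?thesis
        using complement_Omega_scaled_le[OF N _ q n \<theta>] by (simp add: C_def)
    qed
  qed
qed

end

theorem lemma3p6:
  fixes M :: "'a measure" and T c :: real and F :: "real \<Rightarrow> 'a measure"
    and W :: "real \<Rightarrow> 'a \<Rightarrow> real^'m::finite" and \<xi> :: "'a \<Rightarrow> real^'d::finite"
    and \<mu> :: "real^'d \<Rightarrow> real^'d" and \<mu>' :: "real^'d \<Rightarrow> ((real^'d) \<Rightarrow>\<^sub>L (real^'d))"
    and \<sigma> :: "real^'d \<Rightarrow> ((real^'m) \<Rightarrow>\<^sub>L (real^'d))"
  assumes "prob_space M"
    and "0 < T"
    and "normal_filtration M T F"
    and "std_brownian_motion M T F W"
    and "\<xi> \<in> borel_measurable (F 0)"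
    and "\<forall>p\<ge>1. (\<integral>\<^sup>+ \<omega>. ennreal (norm (\<xi> \<omega>) powr p) \<partial>M) < \<infinity>"
    and "0 < c"
    and "\<forall>x. (\<mu> has_derivative blinfun_apply (\<mu>' x)) (at x)"
    and "continuous_on UNIV \<mu>'"
    and "\<forall>x. norm (\<mu>' x) \<le> c * (1 + norm x powr c)"
    and "\<forall>x y. norm (\<sigma> x - \<sigma> y) \<le> c * norm (x - y)"
    and "\<forall>x y. inner (x - y) (\<mu> x - \<mu> y) \<le> c * (norm (x - y))\<^sup>2"
  shows "\<forall>p\<ge>1. bdd_above
           ((\<lambda>N. real N powr p * measure M (space M - OmegaN M c T \<mu> \<sigma> W \<xi> N N)) ` {1..})"
proof -
  have "continuous_on UNIV \<mu>"
    using assms(8) has_derivative_continuous by (blast intro: continuous_at_imp_continuous_on)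
  with assms interpret tamed_euler_setting M T c F W \<xi> \<mu> \<sigma>
    by (intro tamed_euler_setting.intro) auto
  show ?thesis using complement_Omega_bounded by blast
qed

end
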